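(* Let $k,\ell$ be integers with $1\leq k\leq \ell$, let $L$ be a (right) Leibniz algebra and let $B$ be an ideal of $L$ which is $\mathrm{Es}_k$-right nil. Let $P=a_ma_{m-1}\cdots a_2a_1$ be a right product of elements $a_1,\dots,a_m\in L$ of which at least $2\ell$ belong to $B$. Then $P\in (B^{\ell})_{(L,k)}$.
   Context: A (right) Leibniz algebra is a vector space $L$ over a field $F$ (characteristic $\neq 2$, finite-dimensional) with a bilinear product $(x,y)\mapsto xy$ satisfying $x(yz)=(xy)z-(xz)y$. For subspaces $U,V$, $UV$ is the span of all $uv$; right powers $B^1=B$, $B^{j+1}=B^jB$. An ideal is a subspace $B$ with $LB\subseteq B$, $BL\subseteq B$. Right product: $a_m\cdots a_1:=((\cdots((a_ma_{m-1})a_{m-2})\cdots)a_2)a_1$. For a subspace $D\subseteq L$ and integer $k\geq 1$, $D_{(L,k)}$ is the subspace spanned by all right products $d\,x_k\cdots x_2x_1$ with $d\in D$, $x_1,\dots,x_k\in L$. $\mathrm{Ess}(L)$ is the ideal generated by all squares $xx$, and $\mathrm{Es}(B)=B\cap\mathrm{Ess}(L)$. A nonzero ideal $B$ is called $\mathrm{Es}_k$-right nil if $\mathrm{Es}(B)_{(L,k)}=\{0\}$. *)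

theory Defs
  imports Complex_Main
begin

definition leibniz_algebra ::
  "('a::field \<Rightarrow> 'v::ab_group_add \<Rightarrow> 'v) \<Rightarrow> ('v \<Rightarrow> 'v \<Rightarrow> 'v) \<Rightarrow> bool" where
  "leibniz_algebra sc mul \<longleftrightarrow>
     (\<exists>Bs. finite_dimensional_vector_space sc Bs) \<and>
     (2::'a) \<noteq> 0 \<and>
     (\<forall>x y z. mul (x + y) z = mul x z + mul y z) \<and>
     (\<forall>x y z. mul x (y + z) = mul x y + mul x z) \<and>
     (\<forall>c x y. mul (sc c x) y = sc c (mul x y)) \<and>
     (\<forall>c x y. mul x (sc c y) = sc c (mul x y)) \<and>
     (\<forall>x y z. mul x (mul y z) = mul (mul x y) z - mul (mul x z) y)"

definition sprod ::
  "('a::field \<Rightarrow> 'v::ab_group_add \<Rightarrow> 'v) \<Rightarrow> ('v \<Rightarrow> 'v \<Rightarrow> 'v) \<Rightarrow> 'v set \<Rightarrow> 'v set \<Rightarrow> 'v set" where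
  "sprod sc mul U V = module.span sc {mul u v | u v. u \<in> U \<and> v \<in> V}"

text \<open>Right powers: rpow B 1 = B, rpow B (j+1) = (rpow B j) B.
  (The value at 0 is an irrelevant convention.)\<close>
fun rpow ::
  "('a::field \<Rightarrow> 'v::ab_group_add \<Rightarrow> 'v) \<Rightarrow> ('v \<Rightarrow> 'v \<Rightarrow> 'v) \<Rightarrow> 'v set \<Rightarrow> nat \<Rightarrow> 'v set" where
  "rpow sc mul B 0 = B"
| "rpow sc mul B (Suc 0) = B"
| "rpow sc mul B (Suc (Suc j)) = sprod sc mul (rpow sc mul B (Suc j)) B"

definition lideal ::
  "('a::field \<Rightarrow> 'v::ab_group_add \<Rightarrow> 'v) \<Rightarrow> ('v \<Rightarrow> 'v \<Rightarrow> 'v) \<Rightarrow> 'v set \<Rightarrow> bool" where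
  "lideal sc mul B \<longleftrightarrow> module.subspace sc B \<and>
     (\<forall>x b. b \<in> B \<longrightarrow> mul x b \<in> B \<and> mul b x \<in> B)"

text \<open>Right product: rprod [a_m, a_(m-1), ..., a_1] = ((...(a_m a_(m-1))...)a_2)a_1.\<close>
fun rprod :: "('v \<Rightarrow> 'v \<Rightarrow> 'v) \<Rightarrow> 'v list \<Rightarrow> 'v" where
  "rprod mul [] = undefined"
| "rprod mul (x # xs) = foldl mul x xs"

definition DLk ::
  "('a::field \<Rightarrow> 'v::ab_group_add \<Rightarrow> 'v) \<Rightarrow> ('v \<Rightarrow> 'v \<Rightarrow> 'v) \<Rightarrow> 'v set \<Rightarrow> nat \<Rightarrow> 'v set" where
  "DLk sc mul D k = module.span sc {rprod mul (d # xs) | d xs. d \<in> D \<and> length xs = k}"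

definition Ess ::
  "('a::field \<Rightarrow> 'v::ab_group_add \<Rightarrow> 'v) \<Rightarrow> ('v \<Rightarrow> 'v \<Rightarrow> 'v) \<Rightarrow> 'v set" where
  "Ess sc mul = \<Inter>{I. lideal sc mul I \<and> {mul x x | x. True} \<subseteq> I}"

definition Es ::
  "('a::field \<Rightarrow> 'v::ab_group_add \<Rightarrow> 'v) \<Rightarrow> ('v \<Rightarrow> 'v \<Rightarrow> 'v) \<Rightarrow> 'v set \<Rightarrow> 'v set" where
  "Es sc mul B = B \<inter> Ess sc mul"

definition Es_right_nil ::
  "('a::field \<Rightarrow> 'v::ab_group_add \<Rightarrow> 'v) \<Rightarrow> ('v \<Rightarrow> 'v \<Rightarrow> 'v) \<Rightarrow> nat \<Rightarrow> 'v set \<Rightarrow> bool" where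
  "Es_right_nil sc mul k B \<longleftrightarrow> lideal sc mul B \<and> B \<noteq> {0} \<and> DLk sc mul (Es sc mul B) k = {0}"

end

theory Submission
  imports Defs
begin

text \<open>Right multiplication by an element b is a derivation of a right Leibniz algebra, so
  a right product containing a factor b of the ideal B can be rewritten as a sum of right
  products in which b has been absorbed into the factor immediately to its left. Taking b
  to be the first factor from B, the product of the head with b gains one factor in B,
  while the other summands are shorter right products with the same number of factors
  from B; by induction on the length, every right product having at least l factors from
  B before its last k factors lies in (B^l)_(L,k). With 2l factors from B in total and
  k \<le> l, at least l of them precede the last k factors.\<close>

locale right_leibniz = module sc
  for sc :: "'a::field \<Rightarrow> 'v::ab_group_add \<Rightarrow> 'v" +
  fixes mul :: "'v \<Rightarrow> 'v \<Rightarrow> 'v"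
  assumes mul_add_left: "mul (x + y) z = mul x z + mul y z"
    and mul_scale_left: "mul (sc c x) y = sc c (mul x y)"
    and right_leibniz: "mul x (mul y z) = mul (mul x y) z - mul (mul x z) y"
begin

lemma mul_zero_left [simp]: "mul 0 z = 0"
  using mul_add_left[of 0 0 z] by simp

lemma mul_derivation: "mul (mul u w) b = mul (mul u b) w + mul u (mul w b)"
  using right_leibniz[of u w b] by (simp add: algebra_simps)

lemma foldl_add_left: "foldl mul (x + y) ys = foldl mul x ys + foldl mul y ys"
  by (induction ys arbitrary: x y) (simp_all add: mul_add_left)

lemma foldl_swap:
  "foldl mul d (ws @ w # b # ys) = foldl mul d (ws @ b # w # ys) + foldl mul d (ws @ mul w b # ys)"
  by (simp only: foldl_append foldl_Cons mul_derivation[of "foldl mul d ws" w b] foldl_add_left)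

lemma foldl_pull_factor_in_subspace:
  assumes "subspace S"
    and "foldl mul (mul d b) (ws @ ys) \<in> S"
    and "\<And>j. j < length ws \<Longrightarrow> foldl mul d (ws[j := mul (ws ! j) b] @ ys) \<in> S"
  shows "foldl mul d (ws @ b # ys) \<in> S"
  using assms(2,3)
proof (induction ws arbitrary: ys rule: rev_induct)
  case Nil
  then show ?case by simp
next
  case (snoc w ws)
  have "foldl mul d (ws @ b # w # ys) \<in> S"
  proof (rule snoc.IH)
    show "foldl mul (mul d b) (ws @ w # ys) \<in> S"
      using snoc.prems(1) by simp
    show "foldl mul d (ws[j := mul (ws ! j) b] @ w # ys) \<in> S" if "j < length ws" for j
      using snoc.prems(2)[of j] that by (simp add: list_update_append nth_append)
  qed
  moreover have "foldl mul d (ws @ mul w b # ys) \<in> S"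
    using snoc.prems(2)[of "length ws"] by simp
  ultimately show ?case
    using foldl_swap[of d ws w b ys] subspace_add[OF assms(1)] by simp
qed

context
  fixes B :: "'v set"
  assumes ideal: "lideal sc mul B"
begin

lemma rpow_mul_right_closed: "u \<in> rpow sc mul B (Suc j) \<Longrightarrow> mul u x \<in> rpow sc mul B (Suc j)"
proof (induction j arbitrary: u x)
  case 0
  then show ?case using ideal by (simp add: lideal_def)
next
  case (Suc j)
  let ?S = "{mul u b | u b. u \<in> rpow sc mul B (Suc j) \<and> b \<in> B}"
  have "u \<in> span ?S" using Suc.prems by (simp add: sprod_def)
  then have "mul u x \<in> span ?S"
  proof (induction rule: span_induct_alt)
    case base
    then show ?case by (simp add: span_zero)
  next
    case (step c s y)
    then obtain u b where s: "s = mul u b" "u \<in> rpow sc mul B (Suc j)" "b \<in> B" by blast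
    have "mul b x \<in> B"
      using ideal s(3) by (simp add: lideal_def)
    then have "mul (mul u x) b \<in> span ?S" "mul u (mul b x) \<in> span ?S"
      using Suc.IH[OF s(2)] s(2,3) by (blast intro: span_base)+
    then have "mul s x \<in> span ?S"
      using s(1) mul_derivation[of u b x] by (simp add: span_add)
    then show ?case
      using step.IH by (simp add: mul_add_left mul_scale_left span_add span_scale)
  qed
  then show ?case by (simp add: sprod_def)
qed

lemma rpow_foldl_closed: "u \<in> rpow sc mul B (Suc j) \<Longrightarrow> foldl mul u xs \<in> rpow sc mul B (Suc j)"
  by (induction xs arbitrary: u) (auto intro: rpow_mul_right_closed)

lemma mul_in_rpow_Suc:
  assumes "0 < i \<Longrightarrow> d \<in> rpow sc mul B i" and "b \<in> B"
  shows "mul d b \<in> rpow sc mul B (Suc i)"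
proof (cases i)
  case 0
  then show ?thesis using ideal assms(2) by (simp add: lideal_def)
next
  case (Suc j)
  then show ?thesis using assms by (auto simp: sprod_def intro!: span_base)
qed

lemma foldl_rpow_in_DLk:
  assumes "d \<in> rpow sc mul B (Suc j)" and "k \<le> length zs"
  shows "foldl mul d (xs @ zs) \<in> DLk sc mul (rpow sc mul B (Suc j)) k"
proof -
  define n where "n = length zs - k"
  have "foldl mul d (xs @ zs) = rprod mul (foldl mul d (xs @ take n zs) # drop n zs)"
    by (metis append_assoc append_take_drop_id foldl_append rprod.simps(2))
  moreover have "foldl mul d (xs @ take n zs) \<in> rpow sc mul B (Suc j)"
    using rpow_foldl_closed[OF assms(1)] .
  moreover have "length (drop n zs) = k"
    using assms(2) by (simp add: n_def)
  ultimately show ?thesis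
    unfolding DLk_def by (blast intro: span_base)
qed

text \<open>Here i is the number of factors from B already absorbed into d; i = 0 puts no
  condition on d, since rpow at 0 is B rather than L.\<close>

lemma foldl_in_DLk_rpow:
  assumes "1 \<le> l" and "k \<le> length zs"
    and "i \<le> l" and "0 < i \<Longrightarrow> d \<in> rpow sc mul B i"
    and "l \<le> length (filter (\<lambda>a. a \<in> B) xs) + i"
  shows "foldl mul d (xs @ zs) \<in> DLk sc mul (rpow sc mul B l) k"
  using assms(3-5)
proof (induction "length xs" arbitrary: xs d i rule: less_induct)
  case less
  show ?case
  proof (cases "i = l")
    case True
    then show ?thesis
      using less.prems(2) assms(1,2) foldl_rpow_in_DLk[of d "l - 1"] by simp
  next
    case False
    then have "filter (\<lambda>a. a \<in> B) xs \<noteq> []"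
      using less.prems(1,3) by auto
    then have "\<exists>x\<in>set xs. x \<in> B"
      by (simp add: filter_empty_conv)
    then obtain ws b ys where xs: "xs = ws @ b # ys" "b \<in> B" "\<forall>w\<in>set ws. w \<notin> B"
      using split_list_first_prop[of xs "\<lambda>x. x \<in> B"] by blast
    have count: "length (filter (\<lambda>a. a \<in> B) xs) = Suc (length (filter (\<lambda>a. a \<in> B) ys))"
      using xs by (simp add: filter_empty_conv)
    have "foldl mul (mul d b) (ws @ ys @ zs) \<in> DLk sc mul (rpow sc mul B l) k"
      using less.hyps[of "ws @ ys" "Suc i"] less.prems False count xs
        mul_in_rpow_Suc[of i d b] by simp
    moreover have "foldl mul d (ws[j := mul (ws ! j) b] @ ys @ zs) \<in> DLk sc mul (rpow sc mul B l) k"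
      if j: "j < length ws" for j
    proof -
      have "mul (ws ! j) b \<in> set (ws[j := mul (ws ! j) b])"
        using j by (rule set_update_memI)
      moreover have "mul (ws ! j) b \<in> B"
        using ideal xs(2) by (simp add: lideal_def)
      ultimately have "0 < length (filter (\<lambda>a. a \<in> B) (ws[j := mul (ws ! j) b]))"
        by (auto simp: length_greater_0_conv filter_empty_conv)
      then have "l \<le> length (filter (\<lambda>a. a \<in> B) (ws[j := mul (ws ! j) b] @ ys)) + i"
        unfolding filter_append length_append using less.prems(3) count by linarith
      then show ?thesis
        using less.hyps[of "ws[j := mul (ws ! j) b] @ ys" i d] less.prems(1,2) xs(1) by simp
    qed
    ultimately show ?thesis
      using foldl_pull_factor_in_subspace[of "DLk sc mul (rpow sc mul B l) k" d b ws "ys @ zs"]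
      by (simp add: xs(1) DLk_def)
  qed
qed

end

end

lemma leibniz_algebra_imp_right_leibniz:
  assumes "leibniz_algebra sc mul"
  shows "right_leibniz sc mul"
proof (rule right_leibniz.intro)
  show "module sc"
    using assms unfolding leibniz_algebra_def module_iff_vector_space
    by (auto dest: finite_dimensional_vector_space.axioms(1))
  show "right_leibniz_axioms sc mul"
    using assms by (auto simp: right_leibniz_axioms_def leibniz_algebra_def)
qed

theorem lemma4p3:
  fixes sc :: "'a::field \<Rightarrow> 'v::ab_group_add \<Rightarrow> 'v"
    and mul :: "'v \<Rightarrow> 'v \<Rightarrow> 'v"
    and B :: "'v set" and k l :: nat and as :: "'v list"
  assumes "leibniz_algebra sc mul"
    and "1 \<le> k" and "k \<le> l"
    and "lideal sc mul B"
    and "Es_right_nil sc mul k B"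
    and "length (filter (\<lambda>a. a \<in> B) as) \<ge> 2 * l"
  shows "rprod mul as \<in> DLk sc mul (rpow sc mul B l) k"
proof -
  interpret right_leibniz sc mul
    using assms(1) by (rule leibniz_algebra_imp_right_leibniz)
  let ?count = "\<lambda>xs. length (filter (\<lambda>a. a \<in> B) xs)"
  obtain a rest where as: "as = a # rest"
    using assms(2,3,6) by (cases as) auto
  define n where "n = length rest - k"
  define i :: nat where "i = (if a \<in> B then 1 else 0)"
  have "2 * l \<le> length as"
    using assms(6) length_filter_le[of "\<lambda>a. a \<in> B" as] by linarith
  then have "k \<le> length rest"
    using assms(2,3) by (simp add: as)
  then have "?count (drop n rest) \<le> k"
    using length_filter_le[of _ "drop n rest"] by (simp add: n_def)
  moreover have "?count rest = ?count (take n rest) + ?count (drop n rest)"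
    by (metis append_take_drop_id filter_append length_append)
  moreover have "?count as = i + ?count rest"
    by (simp add: as i_def)
  ultimately have count: "l \<le> ?count (take n rest) + i"
    using assms(3,6) by linarith
  have "i \<le> l" and "0 < i \<Longrightarrow> a \<in> rpow sc mul B i"
    using assms(2,3) by (simp_all add: i_def split: if_splits)
  moreover have "1 \<le> l" and "k \<le> length (drop n rest)"
    using assms(2,3) \<open>k \<le> length rest\<close> by (simp_all add: n_def)
  ultimately have "foldl mul a (take n rest @ drop n rest) \<in> DLk sc mul (rpow sc mul B l) k"
    using foldl_in_DLk_rpow[OF assms(4), of l k "drop n rest" i a "take n rest"] count by blast
  then show ?thesis
    by (simp add: as)
qed

end
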